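(* Let $G$ be a connected graph of order $n\geq 3$. If $\operatorname{diam}(G)=2$, then $prc(G)=\chi'(G)$.
   Context: A path in an edge-coloured graph is a rainbow path if its edges receive pairwise distinct colours. The proper rainbow connection number $prc(G)$ of a nontrivial connected graph is the minimum number of colours in a proper edge-colouring (adjacent edges get distinct colours) such that every two distinct vertices are joined by a rainbow path. $\chi'(G)$ is the chromatic index of $G$. *)

theory Defs
  imports Main
begin

definition simple_graph :: "'a set \<Rightarrow> 'a set set \<Rightarrow> bool" where
  "simple_graph V E \<longleftrightarrow> finite V \<and>
     (\<forall>e\<in>E. \<exists>u v. u \<noteq> v \<and> u \<in> V \<and> v \<in> V \<and> e = {u, v})"

definition path_edges :: "'a list \<Rightarrow> 'a set list" where
  "path_edges xs = map (\<lambda>i. {xs ! i, xs ! Suc i}) [0..<length xs - 1]"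

definition is_path :: "'a set \<Rightarrow> 'a set set \<Rightarrow> 'a \<Rightarrow> 'a \<Rightarrow> 'a list \<Rightarrow> bool" where
  "is_path V E u v xs \<longleftrightarrow> xs \<noteq> [] \<and> hd xs = u \<and> last xs = v \<and> distinct xs \<and>
     set xs \<subseteq> V \<and> set (path_edges xs) \<subseteq> E"

definition connected_graph :: "'a set \<Rightarrow> 'a set set \<Rightarrow> bool" where
  "connected_graph V E \<longleftrightarrow> (\<forall>u\<in>V. \<forall>v\<in>V. \<exists>xs. is_path V E u v xs)"

definition graph_dist :: "'a set \<Rightarrow> 'a set set \<Rightarrow> 'a \<Rightarrow> 'a \<Rightarrow> nat" where
  "graph_dist V E u v = (LEAST k. \<exists>xs. is_path V E u v xs \<and> length xs = Suc k)"

definition diam :: "'a set \<Rightarrow> 'a set set \<Rightarrow> nat" where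
  "diam V E = Max {graph_dist V E u v | u v. u \<in> V \<and> v \<in> V}"

definition proper_edge_colouring :: "'a set set \<Rightarrow> ('a set \<Rightarrow> nat) \<Rightarrow> nat \<Rightarrow> bool" where
  "proper_edge_colouring E c k \<longleftrightarrow> c ` E \<subseteq> {..<k} \<and>
     (\<forall>e1\<in>E. \<forall>e2\<in>E. e1 \<noteq> e2 \<and> e1 \<inter> e2 \<noteq> {} \<longrightarrow> c e1 \<noteq> c e2)"

definition chromatic_index :: "'a set \<Rightarrow> 'a set set \<Rightarrow> nat" where
  "chromatic_index V E = (LEAST k. \<exists>c. proper_edge_colouring E c k)"

definition rainbow_path :: "'a set \<Rightarrow> 'a set set \<Rightarrow> ('a set \<Rightarrow> nat) \<Rightarrow> 'a \<Rightarrow> 'a \<Rightarrow> 'a list \<Rightarrow> bool" where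
  "rainbow_path V E c u v xs \<longleftrightarrow> is_path V E u v xs \<and> distinct (map c (path_edges xs))"

definition proper_rainbow_connection :: "'a set \<Rightarrow> 'a set set \<Rightarrow> nat" where
  "proper_rainbow_connection V E = (LEAST k. \<exists>c. proper_edge_colouring E c k \<and>
     (\<forall>u\<in>V. \<forall>v\<in>V. u \<noteq> v \<longrightarrow> (\<exists>xs. rainbow_path V E c u v xs)))"

end

theory Submission
  imports Defs
begin

text \<open>In a graph of diameter at most 2 any two vertices are joined by a path with at most two
  edges. Such a path is rainbow under every proper edge colouring, because two consecutive edges
  of a path are adjacent. Hence every proper edge colouring is rainbow connecting, and the two
  minima defining \<open>prc(G)\<close> and \<open>\<chi>'(G)\<close> range over the same colourings.\<close>

lemma graph_dist_le_diam:
  assumes "finite V" and "u \<in> V" and "v \<in> V"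
  shows "graph_dist V E u v \<le> diam V E"
proof -
  have "{graph_dist V E u v | u v. u \<in> V \<and> v \<in> V} = (\<lambda>(a, b). graph_dist V E a b) ` (V \<times> V)"
    by auto
  then have "finite {graph_dist V E u v | u v. u \<in> V \<and> v \<in> V}"
    using assms(1) by simp
  then show ?thesis
    unfolding diam_def using assms(2,3) by (auto intro: Max_ge)
qed

lemma shortest_path_exists:
  assumes "is_path V E u v ys"
  shows "\<exists>xs. is_path V E u v xs \<and> length xs = Suc (graph_dist V E u v)"
proof -
  have "length ys = Suc (length ys - 1)"
    using assms unfolding is_path_def by simp
  then have "\<exists>xs. is_path V E u v xs \<and> length xs = Suc (length ys - 1)"
    using assms by metis
  then show ?thesis
    unfolding graph_dist_def by (rule LeastI)
qed

lemma proper_edge_colouringD: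
  assumes "proper_edge_colouring E c k" and "e1 \<in> E" and "e2 \<in> E"
    and "e1 \<noteq> e2" and "e1 \<inter> e2 \<noteq> {}"
  shows "c e1 \<noteq> c e2"
  using assms unfolding proper_edge_colouring_def by simp

lemma path_with_at_most_two_edges_is_rainbow:
  assumes colouring: "proper_edge_colouring E c k"
    and path: "is_path V E u v xs" and short: "length xs \<le> 3"
  shows "rainbow_path V E c u v xs"
proof (cases "length xs = 3")
  case True
  then obtain a b d where xs: "xs = [a, b, d]"
    by (cases xs; cases "tl xs"; cases "tl (tl xs)") auto
  have edges: "path_edges xs = [{a, b}, {b, d}]"
    unfolding xs path_edges_def by (simp add: upt_rec)
  have "{a, b} \<in> E" and "{b, d} \<in> E"
    using path edges unfolding is_path_def by simp_all
  moreover have "{a, b} \<noteq> {b, d}"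
    using path xs unfolding is_path_def by (auto simp: doubleton_eq_iff)
  moreover have "{a, b} \<inter> {b, d} \<noteq> {}"
    by simp
  ultimately have "c {a, b} \<noteq> c {b, d}"
    by (rule proper_edge_colouringD[OF colouring])
  then show ?thesis
    using path edges unfolding rainbow_path_def by simp
next
  case False
  then have "length (path_edges xs) \<le> 1"
    using short unfolding path_edges_def by simp
  then have "distinct (map c (path_edges xs))"
    by (cases "path_edges xs") auto
  then show ?thesis
    using path unfolding rainbow_path_def by simp
qed

lemma proper_colouring_rainbow_connects_if_diam_le_2:
  assumes "finite V" and "connected_graph V E" and "diam V E \<le> 2"
    and "proper_edge_colouring E c k" and "u \<in> V" and "v \<in> V"
  shows "\<exists>xs. rainbow_path V E c u v xs"
proof -
  obtain ys where "is_path V E u v ys"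
    using assms(2,5,6) unfolding connected_graph_def by blast
  then obtain xs where xs: "is_path V E u v xs" "length xs = Suc (graph_dist V E u v)"
    using shortest_path_exists by metis
  moreover have "graph_dist V E u v \<le> 2"
    using graph_dist_le_diam[OF assms(1,5,6), of E] assms(3) by simp
  ultimately have "rainbow_path V E c u v xs"
    using path_with_at_most_two_edges_is_rainbow[OF assms(4)] by simp
  then show ?thesis ..
qed

lemma proper_rainbow_connection_eq_chromatic_index_if_all_rainbow:
  assumes "\<And>c k u v. proper_edge_colouring E c k \<Longrightarrow> u \<in> V \<Longrightarrow> v \<in> V \<Longrightarrow> u \<noteq> v \<Longrightarrow>
    \<exists>xs. rainbow_path V E c u v xs"
  shows "proper_rainbow_connection V E = chromatic_index V E"
proof -
  have "(\<exists>c. proper_edge_colouring E c k \<and>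
      (\<forall>u\<in>V. \<forall>v\<in>V. u \<noteq> v \<longrightarrow> (\<exists>xs. rainbow_path V E c u v xs))) \<longleftrightarrow>
    (\<exists>c. proper_edge_colouring E c k)" for k
    using assms by blast
  then show ?thesis
    unfolding proper_rainbow_connection_def chromatic_index_def by simp
qed

theorem proposition5p1:
  fixes V :: "'a set" and E :: "'a set set"
  assumes "simple_graph V E"
    and "connected_graph V E"
    and "card V \<ge> 3"
    and "diam V E = 2"
  shows "proper_rainbow_connection V E = chromatic_index V E"
proof (rule proper_rainbow_connection_eq_chromatic_index_if_all_rainbow)
  have "finite V"
    using assms(1) unfolding simple_graph_def by simp
  then show "\<exists>xs. rainbow_path V E c u v xs"
    if "proper_edge_colouring E c k" "u \<in> V" "v \<in> V" "u \<noteq> v" for c k u v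
    using proper_colouring_rainbow_connects_if_diam_le_2[OF \<open>finite V\<close> assms(2)] assms(4) that
    by simp
qed

end
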